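(* A graph $G$ is 0-1 strongly EFX-orientable if and only if the following holds: for every subgraph $H\subseteq G$ that is a forest, with connected components (trees) $T_1,\dots,T_k$, there exist vertices $x_1\in T_1,\dots,x_k\in T_k$ such that $\bigcup_{i=1}^k N_H(x_i)$ is an independent set in $G$. Here $N_H(x)$ denotes the set of neighbors of $x$ in $H$.
   Context: All graphs are finite and simple. For a graph $G=(V,E)$ and $v\in V$, $E(v)$ is the set of edges incident to $v$. A graphical instance on $G$ assigns to each vertex $v$ a valuation $f_v:2^E\to\mathbb{R}_{\ge 0}$ that is monotone ($A\subseteq B\Rightarrow f_v(A)\le f_v(B)$) and satisfies $f_v(X)=f_v(X\cap E(v))$ for all $X\subseteq E$. An orientation of $G$ chooses for each edge one of its endpoints as its head; it yields the allocation in which each vertex $v$ receives the bundle $X_v$ of edges whose head is $v$. The orientation is EFX if for all $u,v\in V$ and every $g\in X_v$, $f_u(X_u)\ge f_u(X_v\setminus\{g\})$. A graph $G$ is 0-1 strongly EFX-orientable if for every graphical instance on $G$ in which each $f_v$ is additive ($f_v(X)=\sum_{e\in X}f_v(\{e\})$) with $f_v(\{e\})\in\{0,1\}$ for all edges $e$, there exists an EFX orientation. *)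

theory Defs
  imports Complex_Main
begin

definition simple_graph :: "'a set \<Rightarrow> 'a set set \<Rightarrow> bool" where
  "simple_graph V E \<longleftrightarrow> finite V \<and>
     (\<forall>e\<in>E. \<exists>u v. u \<noteq> v \<and> e = {u, v} \<and> u \<in> V \<and> v \<in> V)"

definition incident_edges :: "'a set set \<Rightarrow> 'a \<Rightarrow> 'a set set" where
  "incident_edges E v = {e \<in> E. v \<in> e}"

definition graphical_instance :: "'a set \<Rightarrow> 'a set set \<Rightarrow> ('a \<Rightarrow> 'a set set \<Rightarrow> real) \<Rightarrow> bool" where
  "graphical_instance V E f \<longleftrightarrow>
     (\<forall>v\<in>V. (\<forall>X Y. X \<subseteq> E \<longrightarrow> Y \<subseteq> E \<longrightarrow> X \<subseteq> Y \<longrightarrow> f v X \<le> f v Y)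
           \<and> (\<forall>X. X \<subseteq> E \<longrightarrow> 0 \<le> f v X)
           \<and> (\<forall>X. X \<subseteq> E \<longrightarrow> f v X = f v (X \<inter> incident_edges E v)))"

definition additive_01_instance :: "'a set \<Rightarrow> 'a set set \<Rightarrow> ('a \<Rightarrow> 'a set set \<Rightarrow> real) \<Rightarrow> bool" where
  "additive_01_instance V E f \<longleftrightarrow> graphical_instance V E f \<and>
     (\<forall>v\<in>V. (\<forall>X. X \<subseteq> E \<longrightarrow> f v X = (\<Sum>e\<in>X. f v {e}))
           \<and> (\<forall>e\<in>E. f v {e} \<in> {0, 1}))"

text \<open>An orientation picks a head h e in each edge e; vertex v receives the edges with head v.\<close>
definition orientation :: "'a set set \<Rightarrow> ('a set \<Rightarrow> 'a) \<Rightarrow> bool" where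
  "orientation E h \<longleftrightarrow> (\<forall>e\<in>E. h e \<in> e)"

definition bundle_of :: "'a set set \<Rightarrow> ('a set \<Rightarrow> 'a) \<Rightarrow> 'a \<Rightarrow> 'a set set" where
  "bundle_of E h v = {e \<in> E. h e = v}"

definition EFX_orientation :: "'a set \<Rightarrow> 'a set set \<Rightarrow> ('a \<Rightarrow> 'a set set \<Rightarrow> real) \<Rightarrow> ('a set \<Rightarrow> 'a) \<Rightarrow> bool" where
  "EFX_orientation V E f h \<longleftrightarrow> orientation E h \<and>
     (\<forall>u\<in>V. \<forall>v\<in>V. \<forall>g\<in>bundle_of E h v. f u (bundle_of E h u) \<ge> f u (bundle_of E h v - {g}))"

definition strongly_EFX_orientable_01 :: "'a set \<Rightarrow> 'a set set \<Rightarrow> bool" where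
  "strongly_EFX_orientable_01 V E \<longleftrightarrow>
     (\<forall>f. additive_01_instance V E f \<longrightarrow> (\<exists>h. EFX_orientation V E f h))"

definition subgraph :: "'a set \<Rightarrow> 'a set set \<Rightarrow> 'a set \<Rightarrow> 'a set set \<Rightarrow> bool" where
  "subgraph W F V E \<longleftrightarrow> W \<subseteq> V \<and> F \<subseteq> E \<and> (\<forall>e\<in>F. e \<subseteq> W)"

definition is_cycle :: "'a set set \<Rightarrow> 'a list \<Rightarrow> bool" where
  "is_cycle F cs \<longleftrightarrow> length cs \<ge> 3 \<and> distinct cs \<and>
     (\<forall>i < length cs. {cs ! i, cs ! ((i + 1) mod length cs)} \<in> F)"

definition forest :: "'a set set \<Rightarrow> bool" where
  "forest F \<longleftrightarrow> \<not> (\<exists>cs. is_cycle F cs)"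

definition components :: "'a set \<Rightarrow> 'a set set \<Rightarrow> 'a set set" where
  "components W F = W // (({(u, v). {u, v} \<in> F})\<^sup>* \<inter> (W \<times> W))"

definition nbrs :: "'a set set \<Rightarrow> 'a \<Rightarrow> 'a set" where
  "nbrs F x = {y. {x, y} \<in> F}"

definition independent :: "'a set set \<Rightarrow> 'a set \<Rightarrow> bool" where
  "independent E S \<longleftrightarrow> (\<forall>e\<in>E. \<not> e \<subseteq> S)"

end

theory Submission
  imports Defs
begin

(* If the valuations counting the incident edges of a forest F admit an EFX orientation, then
   every tree of F has a vertex x receiving no edge of F, since otherwise following the edges
   received would close a cycle.  EFX towards x forces each F-neighbour of x to receive only its
   edge to x, so an edge of G between two such neighbours could be given to neither of them.

   Conversely, for 0-1 valuations take a maximum matching of vertices to edges they value.  The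
   vertices reachable from unmatched ones, each holding the edge to its parent, form a forest
   whose trees are rooted at the unmatched vertices.  Shifting the unmatched vertex of each tree
   along the tree path to the vertex x given by the hypothesis keeps the matching maximum.  Then
   orient matched edges towards their holders and every other edge away from the independent
   set of children of roots: a root only values edges held by its children, and these receive
   nothing else. *)

section \<open>Graphs, components and cycles\<close>

lemma simple_graph_edgeE:
  assumes "simple_graph V E" "e \<in> E"
  obtains u v where "u \<noteq> v" "e = {u, v}" "u \<in> V" "v \<in> V"
  using assms unfolding simple_graph_def by blast

lemma simple_graph_finite_edges:
  assumes "simple_graph V E"
  shows "finite E"
proof -
  have "E \<subseteq> Pow V"
    by (auto elim: simple_graph_edgeE[OF assms])
  then show ?thesis
    using assms finite_subset unfolding simple_graph_def by blast
qed

lemma simple_graph_edge_eq: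
  assumes "simple_graph V E" "e \<in> E" "u \<in> e" "v \<in> e" "u \<noteq> v"
  shows "e = {u, v}"
  using assms by (elim simple_graph_edgeE) auto

lemma simple_graph_no_loop:
  assumes "simple_graph V E"
  shows "{u} \<notin> E"
  using assms by (auto elim: simple_graph_edgeE simp: doubleton_eq_iff)

definition adjacency :: "'a set set \<Rightarrow> ('a \<times> 'a) set" where
  "adjacency F = {(u, v). {u, v} \<in> F}"

lemma components_adjacency: "components W F = W // ((adjacency F)\<^sup>* \<inter> W \<times> W)"
  by (simp add: components_def adjacency_def)

lemma sym_adjacency: "sym (adjacency F)"
  by (auto simp: adjacency_def sym_def insert_commute)

lemma equiv_connected: "equiv W ((adjacency F)\<^sup>* \<inter> W \<times> W)"
proof (rule equivI)
  show "sym ((adjacency F)\<^sup>* \<inter> W \<times> W)"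
    by (intro sym_Int sym_rtrancl sym_adjacency) (auto simp: sym_def)
qed (auto intro: refl_onI transI)

lemma componentE:
  assumes "C \<in> components W F"
  obtains w where "w \<in> W" "C = {y \<in> W. (w, y) \<in> (adjacency F)\<^sup>*}"
  using assms unfolding components_adjacency by (auto elim: quotientE)

lemma component_subset: "C \<in> components W F \<Longrightarrow> C \<subseteq> W"
  by (auto elim: componentE)

lemma component_closed:
  assumes "C \<in> components W F" "y \<in> C" "{y, z} \<in> F" "z \<in> W"
  shows "z \<in> C"
proof -
  have "y \<in> W"
    using assms(1,2) component_subset by blast
  then have "(y, z) \<in> (adjacency F)\<^sup>* \<inter> W \<times> W"
    using assms(3,4) by (auto simp: adjacency_def)
  with assms(1,2) show ?thesis
    unfolding components_adjacency by (rule in_quotient_imp_closed[OF equiv_connected])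
qed

lemma component_eqI:
  assumes "C1 \<in> components W F" "C2 \<in> components W F" "a \<in> C1" "b \<in> C2" "{a, b} \<in> F"
  shows "C1 = C2"
proof -
  have "a \<in> W" "b \<in> W"
    using assms(1-4) component_subset by blast+
  then have "(a, b) \<in> (adjacency F)\<^sup>* \<inter> W \<times> W"
    using assms(5) by (auto simp: adjacency_def)
  with assms(1-4) show ?thesis
    unfolding components_adjacency by (intro quotient_eqI[OF equiv_connected])
qed

lemma Union_components: "\<Union> (components W F) = W"
  unfolding components_adjacency by (rule Union_quotient[OF equiv_connected])

lemma finite_components: "finite W \<Longrightarrow> finite (components W F)"
  unfolding components_adjacency by (rule finite_quotient) auto

lemma components_disjoint:
  "C1 \<in> components W F \<Longrightarrow> C2 \<in> components W F \<Longrightarrow> C1 \<noteq> C2 \<Longrightarrow> C1 \<inter> C2 = {}"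
  unfolding components_adjacency using quotient_disj[OF equiv_connected] by blast

lemma closed_connected_in_components:
  assumes "u \<in> S" "S \<subseteq> W"
    and connected: "\<And>y. y \<in> S \<Longrightarrow> (u, y) \<in> (adjacency F)\<^sup>*"
    and closed: "\<And>a b. a \<in> S \<Longrightarrow> {a, b} \<in> F \<Longrightarrow> b \<in> S"
  shows "S \<in> components W F"
proof -
  have "y \<in> S" if "(u, y) \<in> (adjacency F)\<^sup>*" for y
    using that by (induction rule: rtrancl_induct) (auto simp: adjacency_def assms(1) closed)
  then have "S = ((adjacency F)\<^sup>* \<inter> W \<times> W) `` {u}"
    using assms(1,2) connected by auto
  then show ?thesis
    unfolding components_adjacency using assms(1,2) by (auto intro: quotientI)
qed

lemma first_repetition:
  fixes a :: "nat \<Rightarrow> 'a"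
  assumes "finite A" "\<And>n. a n \<in> A"
  obtains i j where "i < j" "a i = a j" "inj_on a {..<j}"
proof -
  have "\<not> inj_on a {..card A}"
  proof
    assume "inj_on a {..card A}"
    then have "card {..card A} \<le> card A"
      using assms by (intro card_inj_on_le) auto
    then show False
      by simp
  qed
  then have repeats: "\<exists>j. \<exists>i<j. a i = a j"
    unfolding inj_on_def by (metis linorder_neqE_nat)
  define J where "J = (LEAST j. \<exists>i<j. a i = a j)"
  have J: "\<exists>i<J. a i = a J"
    unfolding J_def by (rule LeastI_ex[OF repeats])
  have J_least: "J \<le> j" if "\<exists>i<j. a i = a j" for j
    unfolding J_def using that by (rule Least_le)
  have "inj_on a {..<J}"
  proof (rule inj_onI)
    fix x y assume "x \<in> {..<J}" "y \<in> {..<J}" "a x = a y"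
    then show "x = y"
      by (metis J_least lessThan_iff linorder_neqE_nat not_le)
  qed
  with J that show ?thesis
    by blast
qed

lemma is_cycle_closed_walk:
  assumes "3 \<le> L" "inj_on a {I..<I + L}" "a (I + L) = a I"
    and walk: "\<And>t. t < L \<Longrightarrow> {a (I + t), a (I + t + 1)} \<in> F"
  shows "is_cycle F (map a [I..<I + L])"
proof -
  let ?cs = "map a [I..<I + L]"
  have nth: "?cs ! t = a (I + t)" if "t < L" for t
    using that by simp
  have next_nth: "?cs ! ((t + 1) mod L) = a (I + t + 1)" if "t < L" for t
  proof (cases "t + 1 < L")
    case False
    then have L: "Suc t = L"
      using that by simp
    then have "a (Suc (I + t)) = a I"
      using assms(3) by (metis add_Suc_right)
    with L show ?thesis
      using assms(1) by simp
  qed (simp add: nth)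
  have "distinct ?cs"
    using assms(2) by (simp add: distinct_map)
  with assms(1) show ?thesis
    using walk nth next_nth by (simp add: is_cycle_def)
qed

text \<open>Iterating the successor map runs into a repetition, which cannot come after one step
  (no fixed points) or two (no edge used twice).\<close>

lemma cycle_from_successor_map:
  assumes "finite C" "y0 \<in> C"
    and succ: "\<And>y. y \<in> C \<Longrightarrow> s y \<in> C \<and> s y \<noteq> y \<and> {y, s y} \<in> F"
    and edge_inj: "\<And>y z. y \<in> C \<Longrightarrow> z \<in> C \<Longrightarrow> {y, s y} = {z, s z} \<Longrightarrow> y = z"
  shows "\<exists>cs. is_cycle F cs"
proof -
  define a where "a n = (s ^^ n) y0" for n
  have a_Suc: "a (Suc n) = s (a n)" for n
    by (simp add: a_def)
  have a_in: "a n \<in> C" for n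
    by (induction n) (auto simp: a_def assms(2) succ)
  obtain I J where IJ: "I < J" "a I = a J" and inj: "inj_on a {..<J}"
    by (rule first_repetition[OF assms(1) a_in])
  have "J \<noteq> Suc I"
    using IJ(2) a_Suc succ[OF a_in, of I] by auto
  moreover have "J \<noteq> Suc (Suc I)"
  proof
    assume "J = Suc (Suc I)"
    then have "s (s (a I)) = a I"
      using IJ(2) a_Suc by simp
    then have "a I = s (a I)"
      using edge_inj[OF a_in succ[OF a_in, THEN conjunct1]] by (simp add: insert_commute)
    then show False
      using succ[OF a_in, of I] by simp
  qed
  ultimately have "3 \<le> J - I"
    using IJ(1) by linarith
  moreover have "inj_on a {I..<I + (J - I)}"
    using inj IJ(1) by (auto intro: inj_on_subset)
  ultimately have "is_cycle F (map a [I..<I + (J - I)])"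
    using IJ a_Suc succ[OF a_in] by (intro is_cycle_closed_walk) simp_all
  then show ?thesis
    by blast
qed

lemma is_cycle_edge_inj:
  assumes "is_cycle F cs" "i < length cs" "j < length cs"
    and "{cs ! i, cs ! ((i + 1) mod length cs)} = {cs ! j, cs ! ((j + 1) mod length cs)}"
  shows "i = j"
proof -
  let ?k = "length cs"
  have k: "3 \<le> ?k" "distinct cs"
    using assms(1) by (auto simp: is_cycle_def)
  have idx: "(i + 1) mod ?k < ?k" "(j + 1) mod ?k < ?k"
    using k(1) by (auto intro: mod_less_divisor)
  show ?thesis
  proof (rule ccontr)
    assume "i \<noteq> j"
    then have i: "i = (j + 1) mod ?k" and j: "j = (i + 1) mod ?k"
      using assms(2-4) idx k(2) by (auto simp: doubleton_eq_iff nth_eq_iff_index_eq)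
    have "(i + 2) mod ?k = ((i + 1) mod ?k + 1) mod ?k"
      by (simp only: mod_add_left_eq) simp
    also have "\<dots> = i mod ?k"
      using i j assms(2) by simp
    finally have "(i + 2) mod ?k = i mod ?k" .
    then have "?k dvd 2"
      using mod_eq_dvd_iff_nat[of i "i + 2" ?k] by simp
    then show False
      using k(1) by (auto dest: dvd_imp_le)
  qed
qed

lemma relpow_transfer_avoiding:
  assumes "(x, y) \<in> R ^^ n" "x \<noteq> a" "\<And>z. (z, a) \<notin> R"
    and "\<And>s t. (s, t) \<in> R \<Longrightarrow> s \<noteq> a \<Longrightarrow> (s, t) \<in> R'"
  shows "(x, y) \<in> R' ^^ n"
proof -
  have "(x, y) \<in> R' ^^ n \<and> y \<noteq> a"
    using assms(1)
  proof (induction n arbitrary: y)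
    case (Suc n)
    then obtain z where "(x, z) \<in> R ^^ n" "(z, y) \<in> R"
      by auto
    moreover from this have "(x, z) \<in> R' ^^ n" "z \<noteq> a"
      using Suc.IH by blast+
    ultimately show ?case
      using assms(3,4) by auto
  qed (use assms(2) in simp)
  then show ?thesis ..
qed

lemma rtrancl_transfer_avoiding:
  assumes "(x, y) \<in> R\<^sup>*" "x \<noteq> a" "\<And>z. (z, a) \<notin> R"
    and "\<And>s t. (s, t) \<in> R \<Longrightarrow> s \<noteq> a \<Longrightarrow> (s, t) \<in> R'"
  shows "(x, y) \<in> R'\<^sup>*"
  using relpow_transfer_avoiding[OF _ assms(2-4)] assms(1) rtrancl_power by metis

section \<open>EFX orientations give independent neighbourhoods\<close>

lemma forest_component_has_source:
  assumes graph: "simple_graph V E" and sub: "subgraph W F V E" and "forest F"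
    and head: "\<And>e. e \<in> F \<Longrightarrow> h e \<in> e"
    and C: "C \<in> components W F"
  shows "\<exists>x\<in>C. \<forall>e\<in>F. h e \<noteq> x"
proof (rule ccontr)
  assume "\<not> ?thesis"
  then obtain g where g: "\<And>y. y \<in> C \<Longrightarrow> g y \<in> F \<and> h (g y) = y"
    by metis
  have "\<exists>z. z \<noteq> y \<and> g y = {y, z}" if "y \<in> C" for y
  proof -
    have "g y \<in> E" "y \<in> g y"
      using g[OF that] head[of "g y"] sub by (auto simp: subgraph_def)
    then show ?thesis
      by (auto elim!: simple_graph_edgeE[OF graph])
  qed
  then obtain s where s: "\<And>y. y \<in> C \<Longrightarrow> s y \<noteq> y \<and> g y = {y, s y}"
    by metis
  have succ: "s y \<in> C \<and> s y \<noteq> y \<and> {y, s y} \<in> F" if "y \<in> C" for y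
    using s[OF that] g[OF that] sub component_closed[OF C that]
    by (auto simp: subgraph_def)
  have edge_inj: "y = z" if "y \<in> C" "z \<in> C" "{y, s y} = {z, s z}" for y z
  proof -
    have "h (g y) = h (g z)"
      using s that by simp
    then show ?thesis
      using g that by simp
  qed
  obtain y0 where "y0 \<in> C"
    using C by (auto elim: componentE)
  moreover have "finite C"
  proof (rule finite_subset)
    show "C \<subseteq> V"
      using component_subset[OF C] sub by (auto simp: subgraph_def)
    show "finite V"
      using graph by (simp add: simple_graph_def)
  qed
  ultimately have "\<exists>cs. is_cycle F cs"
    using cycle_from_successor_map[OF _ _ succ edge_inj] by blast
  with \<open>forest F\<close> show False
    by (simp add: forest_def)
qed

definition incidence_count :: "'a set set \<Rightarrow> 'a \<Rightarrow> 'a set set \<Rightarrow> real" where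
  "incidence_count F v X = real (card {e \<in> X. e \<in> F \<and> v \<in> e})"

lemma incidence_count_singleton:
  "incidence_count F v {e} = (if e \<in> F \<and> v \<in> e then 1 else 0)"
proof -
  have "{e' \<in> {e}. e' \<in> F \<and> v \<in> e'} = (if e \<in> F \<and> v \<in> e then {e} else {})"
    by auto
  then show ?thesis
    by (simp add: incidence_count_def)
qed

lemma additive_01_instance_incidence_count:
  assumes "simple_graph V E"
  shows "additive_01_instance V E (incidence_count F)"
proof -
  have additive: "incidence_count F v X = (\<Sum>e\<in>X. incidence_count F v {e})" if "X \<subseteq> E" for v X
  proof -
    have "finite X"
      using that simple_graph_finite_edges[OF assms] finite_subset by blast
    have "incidence_count F v X = (\<Sum>e\<in>{e \<in> X. e \<in> F \<and> v \<in> e}. 1)"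
      by (simp add: incidence_count_def)
    also have "\<dots> = (\<Sum>e\<in>X. if e \<in> F \<and> v \<in> e then 1 else 0)"
      using \<open>finite X\<close> by (rule sum.inter_filter)
    finally show ?thesis
      by (simp add: incidence_count_singleton)
  qed
  have mono: "incidence_count F v X \<le> incidence_count F v Y"
    if "X \<subseteq> Y" "Y \<subseteq> E" for v X Y
  proof -
    have "finite Y"
      using that(2) simple_graph_finite_edges[OF assms] finite_subset by blast
    then show ?thesis
      using that(1) unfolding incidence_count_def by (intro of_nat_mono card_mono) auto
  qed
  have locality: "incidence_count F v X = incidence_count F v (X \<inter> incident_edges E v)"
    if "X \<subseteq> E" for v X
  proof -
    have "{e \<in> X. e \<in> F \<and> v \<in> e} = {e \<in> X \<inter> incident_edges E v. e \<in> F \<and> v \<in> e}"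
      using that by (auto simp: incident_edges_def)
    then show ?thesis
      by (simp add: incidence_count_def)
  qed
  have nonneg: "0 \<le> incidence_count F v X" for v X
    by (simp add: incidence_count_def)
  have zero_one: "incidence_count F v {e} \<in> {0, 1}" for v e
    by (simp add: incidence_count_singleton)
  show ?thesis
    unfolding additive_01_instance_def graphical_instance_def
    by (intro conjI ballI allI impI additive mono locality nonneg zero_one)
qed

text \<open>A second edge g at y would break EFX: x values its own bundle at 0, but y's bundle
  without g at least at 1, because of {x, y}.\<close>

lemma EFX_source_neighbour_bundle:
  assumes graph: "simple_graph V E" and sub: "subgraph W F V E"
    and EFX: "EFX_orientation V E (incidence_count F) h"
    and "x \<in> W" "y \<in> nbrs F x" and source: "\<forall>e\<in>F. h e \<noteq> x"
  shows "bundle_of E h y = {{x, y}}"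
proof -
  have "{x, y} \<in> F"
    using assms(5) by (simp add: nbrs_def)
  then have F: "{x, y} \<in> F" "{x, y} \<in> E" "x \<in> V" "y \<in> V"
    using sub unfolding subgraph_def by blast+
  then have "h {x, y} \<in> {x, y}"
    using EFX unfolding EFX_orientation_def orientation_def by blast
  then have "h {x, y} = y"
    using source F(1) by blast
  then have xy: "{x, y} \<in> bundle_of E h y"
    using F(2) by (simp add: bundle_of_def)
  have no_F_edge: "{e \<in> bundle_of E h x. e \<in> F \<and> x \<in> e} = {}"
    using source by (auto simp: bundle_of_def)
  have x_bundle: "incidence_count F x (bundle_of E h x) = 0"
    unfolding incidence_count_def no_F_edge by simp
  have "g = {x, y}" if g: "g \<in> bundle_of E h y" for g
  proof (rule ccontr)
    assume "g \<noteq> {x, y}"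
    then have "{x, y} \<in> {e \<in> bundle_of E h y - {g}. e \<in> F \<and> x \<in> e}"
      using xy F(1) by auto
    then have "incidence_count F x (bundle_of E h y - {g}) > 0"
      using simple_graph_finite_edges[OF graph]
      by (auto simp: incidence_count_def bundle_of_def card_gt_0_iff)
    moreover have "incidence_count F x (bundle_of E h y - {g}) \<le> 0"
      using EFX F(3,4) g x_bundle by (force simp: EFX_orientation_def)
    ultimately show False
      by simp
  qed
  with xy show ?thesis
    by blast
qed

text \<open>An edge {a, b} given to an F-neighbour a of a source x must be {x, a}; so b = x, and
  as b is an F-neighbour of the source of its own tree, x would be adjacent to itself.\<close>

lemma independent_source_neighbourhoods:
  assumes graph: "simple_graph V E" and sub: "subgraph W F V E"
    and EFX: "EFX_orientation V E (incidence_count F) h"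
    and x: "\<And>C. C \<in> components W F \<Longrightarrow> x C \<in> C \<and> (\<forall>e\<in>F. h e \<noteq> x C)"
  shows "independent E (\<Union>C\<in>components W F. nbrs F (x C))"
proof -
  have no_edge: False
    if ab: "{a, b} \<in> E" "h {a, b} = a" and C1: "C1 \<in> components W F" "a \<in> nbrs F (x C1)"
      and C2: "C2 \<in> components W F" "b \<in> nbrs F (x C2)" for a b C1 C2
  proof -
    have "x C1 \<in> W"
      using x[OF C1(1)] component_subset[OF C1(1)] by blast
    then have "bundle_of E h a = {{x C1, a}}"
      by (rule EFX_source_neighbour_bundle[OF graph sub EFX _ C1(2)]) (use x[OF C1(1)] in blast)
    moreover have "{a, b} \<in> bundle_of E h a"
      using ab by (simp add: bundle_of_def)
    ultimately have "{a, b} = {x C1, a}"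
      by blast
    moreover have "a \<noteq> b"
      using ab(1) simple_graph_no_loop[OF graph] by auto
    ultimately have "b = x C1"
      by (auto simp: doubleton_eq_iff)
    then have "{x C2, x C1} \<in> F"
      using C2(2) by (simp add: nbrs_def)
    moreover from this have "C2 = C1"
      using C1(1) C2(1) x by (intro component_eqI) auto
    ultimately show False
      using sub simple_graph_no_loop[OF graph] by (auto simp: subgraph_def)
  qed
  show ?thesis
    unfolding independent_def
  proof (intro ballI notI)
    fix e assume "e \<in> E" "e \<subseteq> (\<Union>C\<in>components W F. nbrs F (x C))"
    moreover obtain a b where "e = {a, b}"
      using \<open>e \<in> E\<close> by (auto elim: simple_graph_edgeE[OF graph])
    moreover have "h e \<in> e"
      using EFX \<open>e \<in> E\<close> by (simp add: EFX_orientation_def orientation_def)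
    ultimately show False
      using no_edge[of a b] no_edge[of b a] by (auto simp: insert_commute)
  qed
qed

lemma strongly_EFX_orientable_imp_independent_neighbourhoods:
  assumes graph: "simple_graph V E" and "strongly_EFX_orientable_01 V E"
    and sub: "subgraph W F V E" and "forest F"
  shows "\<exists>x. (\<forall>C\<in>components W F. x C \<in> C) \<and>
           independent E (\<Union>C\<in>components W F. nbrs F (x C))"
proof -
  obtain h where EFX: "EFX_orientation V E (incidence_count F) h"
    using assms(2) additive_01_instance_incidence_count[OF graph]
    unfolding strongly_EFX_orientable_01_def by blast
  then have "\<And>e. e \<in> F \<Longrightarrow> h e \<in> e"
    using sub by (auto simp: EFX_orientation_def orientation_def subgraph_def)
  then obtain x where x: "\<And>C. C \<in> components W F \<Longrightarrow> x C \<in> C \<and> (\<forall>e\<in>F. h e \<noteq> x C)"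
    using forest_component_has_source[OF graph sub \<open>forest F\<close>] by metis
  then show ?thesis
    using independent_source_neighbourhoods[OF graph sub EFX] by blast
qed

section \<open>0-1 valuations and maximum matchings of liked edges\<close>

context
  fixes V :: "'a set" and E :: "'a set set" and f :: "'a \<Rightarrow> 'a set set \<Rightarrow> real"
  assumes additive: "additive_01_instance V E f"
begin

lemma additive_01_sum: "u \<in> V \<Longrightarrow> X \<subseteq> E \<Longrightarrow> f u X = (\<Sum>e\<in>X. f u {e})"
  using additive unfolding additive_01_instance_def by blast

lemma additive_01_singleton: "u \<in> V \<Longrightarrow> e \<in> E \<Longrightarrow> f u {e} \<in> {0, 1}"
  using additive unfolding additive_01_instance_def by blast

lemma additive_01_local: "u \<in> V \<Longrightarrow> X \<subseteq> E \<Longrightarrow> f u X = f u (X \<inter> incident_edges E u)"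
  using additive unfolding additive_01_instance_def graphical_instance_def by blast

lemma additive_01_liked_incident:
  assumes "u \<in> V" "e \<in> E" "f u {e} = 1"
  shows "u \<in> e"
proof (rule ccontr)
  assume "u \<notin> e"
  then have "{e} \<inter> incident_edges E u = {}"
    by (simp add: incident_edges_def)
  then have "f u {e} = f u {}"
    using additive_01_local[OF assms(1), of "{e}"] assms(2) by simp
  also have "\<dots> = 0"
    using additive_01_sum[OF assms(1), of "{}"] by simp
  finally show False
    using assms(3) by simp
qed

lemma additive_01_eq_card:
  assumes "u \<in> V" "X \<subseteq> E" "finite X"
  shows "f u X = card {e \<in> X. f u {e} = 1}"
proof -
  have "f u X = (\<Sum>e\<in>X. if f u {e} = 1 then 1 else 0)"
  proof (subst additive_01_sum[OF assms(1,2)], rule sum.cong)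
    fix e assume "e \<in> X"
    then have "f u {e} \<in> {0, 1}"
      using additive_01_singleton[OF assms(1)] assms(2) by blast
    then show "f u {e} = (if f u {e} = 1 then 1 else 0)"
      by auto
  qed simp
  also have "\<dots> = card {e \<in> X. f u {e} = 1}"
    using assms(3) by (simp add: sum.inter_filter[symmetric])
  finally show ?thesis .
qed

end

locale valued_graph =
  fixes V :: "'a set" and E :: "'a set set" and f :: "'a \<Rightarrow> 'a set set \<Rightarrow> real"
  assumes graph: "simple_graph V E" and valuations: "additive_01_instance V E f"
begin

lemma finite_V: "finite V"
  using graph by (simp add: simple_graph_def)

lemma finite_E: "finite E"
  using simple_graph_finite_edges[OF graph] .

definition likes :: "'a \<Rightarrow> 'a set \<Rightarrow> bool" where
  "likes z e \<longleftrightarrow> e \<in> E \<and> z \<in> e \<and> f z {e} = 1"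

lemma likes_in_V: "likes z e \<Longrightarrow> z \<in> V"
  unfolding likes_def using graph by (auto elim: simple_graph_edgeE)

lemma valuation_eq_card_likes:
  assumes "u \<in> V" "X \<subseteq> E"
  shows "f u X = card {e \<in> X. likes u e}"
proof -
  have "{e \<in> X. f u {e} = 1} = {e \<in> X. likes u e}"
    using assms additive_01_liked_incident[OF valuations] by (auto simp: likes_def)
  moreover have "finite X"
    using finite_subset[OF assms(2) finite_E] .
  ultimately show ?thesis
    using additive_01_eq_card[OF valuations assms] by simp
qed

definition matching :: "('a \<Rightarrow> 'a set option) \<Rightarrow> bool" where
  "matching q \<longleftrightarrow> (\<forall>z e. q z = Some e \<longrightarrow> likes z e) \<and>
     (\<forall>a b e. q a = Some e \<longrightarrow> q b = Some e \<longrightarrow> a = b)"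

definition max_matching :: "('a \<Rightarrow> 'a set option) \<Rightarrow> bool" where
  "max_matching q \<longleftrightarrow> matching q \<and> (\<forall>q'. matching q' \<longrightarrow> card (dom q') \<le> card (dom q))"

definition arcs :: "('a \<Rightarrow> 'a set option) \<Rightarrow> ('a \<times> 'a) set" where
  "arcs q = {(a, b). q b = Some {a, b} \<and> likes a {a, b}}"

lemma matching_likes: "matching q \<Longrightarrow> q z = Some e \<Longrightarrow> likes z e"
  unfolding matching_def by blast

lemma matching_inj: "matching q \<Longrightarrow> q a = Some e \<Longrightarrow> q b = Some e \<Longrightarrow> a = b"
  unfolding matching_def by blast

lemma dom_matching: "matching q \<Longrightarrow> dom q \<subseteq> V"
  using likes_in_V by (auto simp: matching_def)

lemma finite_dom_matching: "matching q \<Longrightarrow> finite (dom q)"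
  using finite_subset[OF dom_matching finite_V] .

lemma ex_max_matching: "\<exists>q. max_matching q"
proof -
  have "matching Map.empty"
    by (simp add: matching_def)
  moreover have "\<forall>q. matching q \<longrightarrow> card (dom q) < Suc (card V)"
    using card_mono[OF finite_V dom_matching] by (simp add: less_Suc_eq_le)
  ultimately show ?thesis
    unfolding max_matching_def
    by (rule Lattices_Big.ex_has_greatest_nat[where f = "\<lambda>q. card (dom q)"])
qed

lemma arc_neq: "(a, b) \<in> arcs q \<Longrightarrow> a \<noteq> b"
  using simple_graph_no_loop[OF graph] by (auto simp: arcs_def likes_def)

lemma no_arc_into_hole: "q h = None \<Longrightarrow> (a, h) \<notin> arcs q"
  by (simp add: arcs_def)

lemma max_matching_hole_likes:
  assumes q: "max_matching q" and r: "q r = None" and "likes r e"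
  obtains y where "e = {r, y}" "q y = Some e" "(r, y) \<in> arcs q"
proof -
  have "\<exists>y. q y = Some e"
  proof (rule ccontr)
    assume "\<nexists>y. q y = Some e"
    then have "matching (q(r \<mapsto> e))"
      using q \<open>likes r e\<close> by (auto simp: max_matching_def matching_def)
    then have "card (insert r (dom q)) \<le> card (dom q)"
      using q by (auto simp: max_matching_def)
    moreover have "finite (dom q)"
      using q finite_dom_matching by (simp add: max_matching_def)
    ultimately show False
      using r by (simp add: domIff)
  qed
  then obtain y where y: "q y = Some e"
    by blast
  have "likes y e"
    using q y by (auto simp: max_matching_def matching_def)
  then have "y \<in> e" "r \<in> e" "e \<in> E" "y \<noteq> r"
    using \<open>likes r e\<close> y r by (auto simp: likes_def)
  then have "e = {r, y}"
    using simple_graph_edge_eq[OF graph] by blast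
  with y \<open>likes r e\<close> that show ?thesis
    by (simp add: arcs_def)
qed

definition matching_orientation :: "('a \<Rightarrow> 'a set option) \<Rightarrow> 'a set \<Rightarrow> 'a set \<Rightarrow> 'a" where
  "matching_orientation q S e =
     (if \<exists>w. q w = Some e then THE w. q w = Some e else SOME z. z \<in> e \<and> z \<notin> S)"

context
  fixes q S
  assumes matching: "matching q" and indep: "independent E S"
begin

lemma matching_orientation_held: "q w = Some e \<Longrightarrow> matching_orientation q S e = w"
  using matching_inj[OF matching] unfolding matching_orientation_def by (auto intro: the_equality)

lemma matching_orientation_unheld:
  assumes "e \<in> E" "\<nexists>w. q w = Some e"
  shows "matching_orientation q S e \<in> e - S"
proof -
  have "\<exists>z. z \<in> e \<and> z \<notin> S"
    using indep assms(1) unfolding independent_def by blast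
  then have "(SOME z. z \<in> e \<and> z \<notin> S) \<in> e \<and> (SOME z. z \<in> e \<and> z \<notin> S) \<notin> S"
    by (rule someI_ex)
  with assms(2) show ?thesis
    unfolding matching_orientation_def by simp
qed

lemma orientation_matching_orientation: "orientation E (matching_orientation q S)"
  unfolding orientation_def
proof
  fix e assume "e \<in> E"
  show "matching_orientation q S e \<in> e"
  proof (cases "\<exists>w. q w = Some e")
    case True
    then obtain w where "q w = Some e"
      by blast
    then show ?thesis
      using matching_orientation_held matching_likes[OF matching] by (auto simp: likes_def)
  qed (use matching_orientation_unheld \<open>e \<in> E\<close> in blast)
qed

lemma bundle_matching_orientation_in:
  assumes "v \<in> S" "e \<in> bundle_of E (matching_orientation q S) v"
  shows "q v = Some e"
proof -
  have "\<exists>w. q w = Some e"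
    using assms matching_orientation_unheld by (auto simp: bundle_of_def)
  then show ?thesis
    using assms(2) matching_orientation_held by (auto simp: bundle_of_def)
qed

end

lemma liked_in_other_bundle:
  assumes "orientation E h" "u \<noteq> v"
  shows "{e \<in> bundle_of E h v. likes u e} \<subseteq> {{u, v}}"
proof
  fix e assume "e \<in> {e \<in> bundle_of E h v. likes u e}"
  then have "e \<in> E" "u \<in> e" "v \<in> e"
    using assms(1) by (auto simp: bundle_of_def likes_def orientation_def)
  then show "e \<in> {{u, v}}"
    using simple_graph_edge_eq[OF graph] assms(2) by blast
qed

text \<open>An unmatched vertex only likes edges held by its children, which lie in S and hence
  receive nothing but the edge they hold.\<close>

lemma unmatched_likes_no_other_bundle:
  assumes q: "max_matching q" and indep: "independent E S"
    and children: "\<And>r y. q r = None \<Longrightarrow> (r, y) \<in> arcs q \<Longrightarrow> y \<in> S"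
    and g: "g \<in> bundle_of E (matching_orientation q S) v" and "q u = None" "u \<noteq> v"
  shows "{e \<in> bundle_of E (matching_orientation q S) v - {g}. likes u e} = {}"
proof -
  have matching: "matching q"
    using q by (simp add: max_matching_def)
  have "e \<notin> bundle_of E (matching_orientation q S) v - {g}" if "likes u e" for e
  proof
    assume e: "e \<in> bundle_of E (matching_orientation q S) v - {g}"
    then have "e = {u, v}"
      using liked_in_other_bundle[OF orientation_matching_orientation[OF matching indep]]
        \<open>likes u e\<close> \<open>u \<noteq> v\<close> by blast
    then obtain y where "{u, v} = {u, y}" "(u, y) \<in> arcs q"
      using max_matching_hole_likes[OF q \<open>q u = None\<close>] \<open>likes u e\<close> by blast
    then have "v \<in> S"
      using children[OF \<open>q u = None\<close>] \<open>u \<noteq> v\<close> by (auto simp: doubleton_eq_iff)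
    then have "q v = Some g" "q v = Some e"
      using bundle_matching_orientation_in[OF matching indep] g e by blast+
    with e show False
      by simp
  qed
  then show ?thesis
    by blast
qed

lemma card_liked_matching_orientation:
  assumes q: "max_matching q" and indep: "independent E S"
    and children: "\<And>r y. q r = None \<Longrightarrow> (r, y) \<in> arcs q \<Longrightarrow> y \<in> S"
    and g: "g \<in> bundle_of E (matching_orientation q S) v"
  shows "card {e \<in> bundle_of E (matching_orientation q S) v - {g}. likes u e}
    \<le> card {e \<in> bundle_of E (matching_orientation q S) u. likes u e}"
    (is "card ?T \<le> card ?U")
proof -
  have matching: "matching q"
    using q by (simp add: max_matching_def)
  have "finite ?U"
    using finite_E by (simp add: bundle_of_def)
  consider "u = v" | "u \<noteq> v" "q u = None" | e0 where "u \<noteq> v" "q u = Some e0"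
    by fastforce
  then show ?thesis
  proof cases
    case 1
    with \<open>finite ?U\<close> show ?thesis
      by (intro card_mono) auto
  next
    case 2
    then have "?T = {}"
      by (intro unmatched_likes_no_other_bundle[OF assms])
    then have "card ?T = 0"
      by (simp only: card.empty)
    then show ?thesis
      by simp
  next
    case 3
    then have "e0 \<in> ?U"
      using matching_orientation_held[OF matching indep] matching_likes[OF matching]
      by (auto simp: bundle_of_def likes_def)
    with \<open>finite ?U\<close> have "1 \<le> card ?U"
      by (auto simp: Suc_le_eq card_gt_0_iff)
    moreover have "?T \<subseteq> {{u, v}}"
      using liked_in_other_bundle[OF orientation_matching_orientation[OF matching indep] 3(1)]
      by blast
    then have "card ?T \<le> 1"
      using card_mono[of "{{u, v}}" ?T] by simp
    ultimately show ?thesis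
      by linarith
  qed
qed

lemma EFX_matching_orientation:
  assumes "max_matching q" "independent E S"
    and "\<And>r y. q r = None \<Longrightarrow> (r, y) \<in> arcs q \<Longrightarrow> y \<in> S"
  shows "EFX_orientation V E f (matching_orientation q S)"
proof -
  let ?h = "matching_orientation q S"
  have "f u (bundle_of E ?h v - {g}) \<le> f u (bundle_of E ?h u)"
    if "u \<in> V" "g \<in> bundle_of E ?h v" for u v g
  proof -
    have "f u (bundle_of E ?h v - {g}) = card {e \<in> bundle_of E ?h v - {g}. likes u e}"
      using that(1) by (rule valuation_eq_card_likes) (auto simp: bundle_of_def)
    moreover have "f u (bundle_of E ?h u) = card {e \<in> bundle_of E ?h u. likes u e}"
      using that(1) by (rule valuation_eq_card_likes) (auto simp: bundle_of_def)
    ultimately show ?thesis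
      using card_liked_matching_orientation[OF assms that(2)] by simp
  qed
  moreover have "orientation E ?h"
    using assms(1,2) by (intro orientation_matching_orientation) (simp_all add: max_matching_def)
  ultimately show ?thesis
    unfolding EFX_orientation_def by blast
qed

section \<open>The alternating forest of a maximum matching\<close>

definition reach :: "('a \<Rightarrow> 'a set option) \<Rightarrow> 'a \<Rightarrow> 'a set" where
  "reach q h = {y. (h, y) \<in> (arcs q)\<^sup>*}"

lemma reach_self: "h \<in> reach q h"
  by (simp add: reach_def)

lemma arc_target_holds: "(a, b) \<in> arcs q \<Longrightarrow> q b = Some {a, b}"
  by (simp add: arcs_def)

lemma arc_source_unique: "(a, b) \<in> arcs q \<Longrightarrow> (c, b) \<in> arcs q \<Longrightarrow> a = c"
  using arc_neq by (fastforce simp: arcs_def doubleton_eq_iff)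

lemma reach_parentE:
  assumes "y \<in> reach q h" "y \<noteq> h"
  obtains c where "c \<in> reach q h" "(c, y) \<in> arcs q"
  using assms unfolding reach_def by (auto elim: rtranclE)

lemma reach_hole_unique: "q h = None \<Longrightarrow> q z = None \<Longrightarrow> z \<in> reach q h \<Longrightarrow> z = h"
  using arc_target_holds by (metis option.distinct(1) reach_parentE)

lemma reach_subset_V:
  assumes "matching q" "h \<in> V"
  shows "reach q h \<subseteq> V"
proof
  fix y assume y: "y \<in> reach q h"
  show "y \<in> V"
  proof (cases "y = h")
    case False
    then obtain c where "(c, y) \<in> arcs q"
      using y by (auto elim: reach_parentE)
    then have "q y = Some {c, y}"
      by (rule arc_target_holds)
    then show ?thesis
      using matching_likes[OF assms(1)] likes_in_V by blast
  qed (simp add: assms(2))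
qed

text \<open>A cycle has as many edges as vertices, and the holders of its edges are distinct
  vertices of the cycle.\<close>

lemma held_cycle_edge:
  assumes "matching q" "is_cycle F cs" "F \<subseteq> ran q" "c \<in> set cs"
  obtains e where "q c = Some e" "e \<in> F" "e \<subseteq> set cs"
proof -
  define k where "k = length cs"
  define e where "e i = {cs ! i, cs ! ((i + 1) mod k)}" for i
  have k: "3 \<le> k" "distinct cs"
    using assms(2) by (auto simp: is_cycle_def k_def)
  have e: "e i \<in> F" "e i \<subseteq> set cs" if "i < k" for i
  proof -
    have "(i + 1) mod k < k"
      using k(1) by (auto intro: mod_less_divisor)
    then show "e i \<subseteq> set cs"
      using that by (auto simp: e_def k_def)
    show "e i \<in> F"
      using assms(2) that by (simp add: is_cycle_def e_def k_def)
  qed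
  have "\<exists>w. q w = Some (e i)" if "i < k" for i
    using assms(3) e(1)[OF that] by (auto simp: ran_def)
  then obtain w where w: "\<And>i. i < k \<Longrightarrow> q (w i) = Some (e i)"
    by metis
  have "inj_on w {..<k}"
  proof (rule inj_onI)
    fix i j assume "i \<in> {..<k}" "j \<in> {..<k}" "w i = w j"
    then have "e i = e j"
      using w by (metis lessThan_iff option.inject)
    then show "i = j"
      using is_cycle_edge_inj[OF assms(2)] \<open>i \<in> {..<k}\<close> \<open>j \<in> {..<k}\<close> by (simp add: e_def k_def)
  qed
  moreover have "w ` {..<k} \<subseteq> set cs"
    using w e matching_likes[OF assms(1)] by (force simp: likes_def)
  ultimately have "w ` {..<k} = set cs"
    using k(2) by (intro card_subset_eq) (auto simp: card_image distinct_card k_def)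
  then have "c \<in> w ` {..<k}"
    using assms(4) by simp
  then obtain i where "i < k" "c = w i"
    by auto
  with w e that show ?thesis
    by blast
qed

text \<open>Every non-root vertex of the forest holds the edge to its parent, its unique arc
  predecessor.\<close>

definition forest_vertices :: "('a \<Rightarrow> 'a set option) \<Rightarrow> 'a set" where
  "forest_vertices p = (\<Union>u\<in>{u \<in> V. p u = None}. reach p u)"

definition forest_edges :: "('a \<Rightarrow> 'a set option) \<Rightarrow> 'a set set" where
  "forest_edges p = {e \<in> ran p. e \<subseteq> forest_vertices p}"

context
  fixes p
  assumes p: "max_matching p"
begin

lemma p_matching: "matching p"
  using p by (simp add: max_matching_def)

lemma subgraph_forest: "subgraph (forest_vertices p) (forest_edges p) V E"
  using reach_subset_V[OF p_matching] matching_likes[OF p_matching]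
  by (fastforce simp: subgraph_def forest_vertices_def forest_edges_def ran_def likes_def)

lemma forest_edge_arc:
  assumes "e \<in> forest_edges p"
  obtains a b where "e = {a, b}" "(a, b) \<in> arcs p"
proof -
  obtain b where b: "p b = Some e"
    using assms by (auto simp: forest_edges_def ran_def)
  then have "b \<in> forest_vertices p"
    using assms matching_likes[OF p_matching] by (auto simp: forest_edges_def likes_def)
  then obtain u where "p u = None" "b \<in> reach p u"
    by (auto simp: forest_vertices_def)
  moreover have "b \<noteq> u"
    using b \<open>p u = None\<close> by auto
  ultimately obtain a where "(a, b) \<in> arcs p"
    by (auto elim: reach_parentE)
  with b that show ?thesis
    using arc_target_holds by fastforce
qed

lemma reach_closed_forest_edge:
  assumes "p u = None" "a \<in> reach p u" "{a, b} \<in> forest_edges p"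
  shows "b \<in> reach p u"
proof -
  obtain c d where cd: "{a, b} = {c, d}" "(c, d) \<in> arcs p"
    using forest_edge_arc[OF assms(3)] by metis
  show ?thesis
  proof (cases "a = c")
    case True
    then show ?thesis
      using cd assms(2) arc_neq[OF cd(2)] by (auto simp: reach_def doubleton_eq_iff)
  next
    case False
    then have "a = d" "b = c"
      using cd by (auto simp: doubleton_eq_iff)
    moreover have "a \<noteq> u"
      using assms(1) arc_target_holds[OF cd(2)] \<open>a = d\<close> by auto
    ultimately show ?thesis
      using assms(2) cd(2) arc_source_unique by (metis reach_parentE)
  qed
qed

lemma reach_connected:
  assumes "p u = None" "u \<in> V" "y \<in> reach p u"
  shows "(u, y) \<in> (adjacency (forest_edges p))\<^sup>*"
proof -
  have "(u, y) \<in> (arcs p)\<^sup>*"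
    using assms(3) by (simp add: reach_def)
  then show ?thesis
  proof (induction rule: rtrancl_induct)
    case (step y z)
    then have "y \<in> reach p u" "z \<in> reach p u"
      by (auto simp: reach_def)
    then have "{y, z} \<in> forest_edges p"
      using assms(1,2) arc_target_holds[OF step(2)]
      by (auto simp: forest_edges_def forest_vertices_def ran_def)
    with step.IH show ?case
      by (auto simp: adjacency_def intro: rtrancl_into_rtrancl)
  qed simp
qed

lemma reach_in_components:
  assumes "p u = None" "u \<in> V"
  shows "reach p u \<in> components (forest_vertices p) (forest_edges p)"
  using assms reach_self reach_connected reach_closed_forest_edge
  by (intro closed_connected_in_components) (auto simp: forest_vertices_def)

lemma components_forest:
  assumes "C \<in> components (forest_vertices p) (forest_edges p)"
  obtains u where "u \<in> V" "p u = None" "C = reach p u"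
proof -
  obtain w where "w \<in> C"
    using assms by (auto elim: componentE)
  then obtain u where u: "u \<in> V" "p u = None" "w \<in> reach p u"
    using component_subset[OF assms] by (auto simp: forest_vertices_def)
  then have "C = reach p u"
    using components_disjoint[OF assms reach_in_components[OF u(2,1)]] \<open>w \<in> C\<close> by blast
  with u that show ?thesis
    by blast
qed

text \<open>The root of the tree containing a vertex of the cycle would lie on the cycle, as the
  cycle contains the parent of each of its vertices.\<close>

lemma forest_forest_edges: "forest (forest_edges p)"
  unfolding forest_def
proof
  assume "\<exists>cs. is_cycle (forest_edges p) cs"
  then obtain cs where cycle: "is_cycle (forest_edges p) cs"
    by blast
  have F_held: "forest_edges p \<subseteq> ran p"
    by (auto simp: forest_edges_def)
  have parent_on_cycle: "y \<in> set cs" if arc: "(y, c) \<in> arcs p" and c: "c \<in> set cs" for y c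
  proof -
    obtain e where "p c = Some e" "e \<subseteq> set cs"
      using held_cycle_edge[OF p_matching cycle F_held c] by blast
    with arc_target_holds[OF arc] show ?thesis
      by auto
  qed
  have "cs \<noteq> []"
    using cycle by (auto simp: is_cycle_def)
  then obtain c where "c \<in> set cs"
    using hd_in_set by blast
  moreover from this obtain e where "p c = Some e" "e \<in> forest_edges p"
    by (rule held_cycle_edge[OF p_matching cycle F_held])
  ultimately have "c \<in> forest_vertices p"
    using matching_likes[OF p_matching] by (auto simp: forest_edges_def likes_def)
  then obtain u where u: "p u = None" "(u, c) \<in> (arcs p)\<^sup>*"
    by (auto simp: forest_vertices_def reach_def)
  from u(2) \<open>c \<in> set cs\<close> have "u \<in> set cs"
    by (induction rule: converse_rtrancl_induct) (auto intro: parent_on_cycle)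
  then obtain e where "p u = Some e"
    using held_cycle_edge[OF p_matching cycle F_held] by blast
  with u(1) show False
    by simp
qed

end

section \<open>Re-rooting the alternating forest\<close>

definition shift_hole :: "('a \<Rightarrow> 'a set option) \<Rightarrow> 'a \<Rightarrow> 'a \<Rightarrow> 'a \<Rightarrow> 'a set option" where
  "shift_hole q h v = q(h \<mapsto> {h, v}, v := None)"

context
  fixes q h v
  assumes q: "max_matching q" and hole: "q h = None" and arc: "(h, v) \<in> arcs q"
begin

lemma arc_edge: "q v = Some {h, v}" "h \<noteq> v" "likes h {h, v}" "likes v {h, v}"
  using arc arc_neq[OF arc] matching_likes[of q v] q by (auto simp: arcs_def max_matching_def)

lemma max_matching_shift_hole: "max_matching (shift_hole q h v)"
proof -
  have matching: "matching q"
    using q by (simp add: max_matching_def)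
  have "matching (shift_hole q h v)"
    using matching arc_edge matching_inj[OF matching _ arc_edge(1)]
    unfolding matching_def shift_hole_def by auto
  moreover have "dom (shift_hole q h v) = insert h (dom q - {v})"
    using arc_edge(2) by (auto simp: shift_hole_def)
  moreover have "card (insert h (dom q - {v})) = card (dom q)"
  proof -
    have "finite (dom q)" "v \<in> dom q" "h \<notin> dom q - {v}"
      using finite_dom_matching[OF matching] arc_edge(1) hole by auto
    then show ?thesis
      using card_Suc_Diff1[of "dom q" v] by simp
  qed
  ultimately show ?thesis
    using q by (simp add: max_matching_def)
qed

lemma ran_shift_hole: "ran (shift_hole q h v) = ran q"
proof
  show "ran (shift_hole q h v) \<subseteq> ran q"
    using arc_edge(1) by (auto simp: ran_def shift_hole_def split: if_splits)
  show "ran q \<subseteq> ran (shift_hole q h v)"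
  proof
    fix e assume "e \<in> ran q"
    then obtain a where a: "q a = Some e"
      by (auto simp: ran_def)
    show "e \<in> ran (shift_hole q h v)"
    proof (cases "a = v")
      case True
      then have "shift_hole q h v h = Some e"
        using a arc_edge(1,2) by (simp add: shift_hole_def)
      then show ?thesis
        by (auto simp: ran_def)
    next
      case False
      then have "shift_hole q h v a = Some e"
        using a hole by (auto simp: shift_hole_def)
      then show ?thesis
        by (auto simp: ran_def)
    qed
  qed
qed

lemma arcs_shift_hole: "arcs (shift_hole q h v) = insert (v, h) (arcs q - {(h, v)})"
  using arc_edge hole arc_neq[of _ v q]
  by (auto simp: arcs_def shift_hole_def doubleton_eq_iff insert_commute)

lemma reach_shift_hole_subset: "reach (shift_hole q h v) v \<subseteq> reach q h"
proof
  fix y assume "y \<in> reach (shift_hole q h v) v"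
  then have "(v, y) \<in> (arcs (shift_hole q h v))\<^sup>*"
    by (simp add: reach_def)
  then show "y \<in> reach q h"
  proof (induction rule: rtrancl_induct)
    case base
    show ?case
      using arc by (simp add: reach_def)
  next
    case (step y z)
    then show ?case
      by (auto simp: reach_def arcs_shift_hole intro: rtrancl_into_rtrancl)
  qed
qed

lemma reach_shift_hole: "reach (shift_hole q h v) v = reach q h"
proof
  show "reach q h \<subseteq> reach (shift_hole q h v) v"
  proof
    fix y assume "y \<in> reach q h"
    then have "(h, y) \<in> (arcs q)\<^sup>*"
      by (simp add: reach_def)
    then show "y \<in> reach (shift_hole q h v) v"
    proof (cases rule: converse_rtranclE)
      case base
      have "(v, h) \<in> arcs (shift_hole q h v)"
        by (simp add: arcs_shift_hole)
      with base show ?thesis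
        by (auto simp: reach_def)
    next
      case (step c)
      have "(c, y) \<in> (arcs (shift_hole q h v))\<^sup>*"
        using step(2) arc_neq[OF step(1), symmetric] no_arc_into_hole[of q h, OF hole]
        by (rule rtrancl_transfer_avoiding) (auto simp: arcs_shift_hole)
      moreover have "(v, c) \<in> (arcs (shift_hole q h v))\<^sup>*"
      proof (cases "c = v")
        case False
        then have "(v, h) \<in> arcs (shift_hole q h v)" "(h, c) \<in> arcs (shift_hole q h v)"
          using step(1) by (auto simp: arcs_shift_hole)
        then show ?thesis
          by (rule rtrancl_into_rtrancl[OF r_into_rtrancl])
      qed simp
      ultimately show ?thesis
        by (simp add: reach_def)
    qed
  qed
qed (rule reach_shift_hole_subset)

lemma reach_shift_hole_other:
  assumes "h' \<noteq> h" "h' \<noteq> v"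
  shows "reach (shift_hole q h v) h' = reach q h'"
proof -
  have no_arc_into_v: "(z, v) \<notin> arcs (shift_hole q h v)" for z
    by (simp add: arcs_def shift_hole_def)
  have "(h', y) \<in> (arcs (shift_hole q h v))\<^sup>*" if "(h', y) \<in> (arcs q)\<^sup>*" for y
    using that assms(1) no_arc_into_hole[of q h, OF hole]
    by (rule rtrancl_transfer_avoiding) (auto simp: arcs_shift_hole)
  moreover have "(h', y) \<in> (arcs q)\<^sup>*" if "(h', y) \<in> (arcs (shift_hole q h v))\<^sup>*" for y
    using that assms(2) no_arc_into_v
    by (rule rtrancl_transfer_avoiding) (auto simp: arcs_shift_hole)
  ultimately show ?thesis
    unfolding reach_def by blast
qed

end

definition rooted_matching :: "'a set set \<Rightarrow> 'a set set \<Rightarrow> ('a \<Rightarrow> 'a set option) \<Rightarrow> bool" where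
  "rooted_matching Cs R q \<longleftrightarrow> max_matching q \<and> ran q = R \<and>
     (\<forall>C\<in>Cs. \<exists>h\<in>C. q h = None \<and> C = reach q h) \<and> (\<forall>z\<in>V. q z = None \<longrightarrow> z \<in> \<Union>Cs)"

lemma rooted_matchingE:
  assumes "rooted_matching Cs R q" "C \<in> Cs"
  obtains h where "h \<in> C" "q h = None" "C = reach q h"
  using assms unfolding rooted_matching_def by blast

context
  fixes Cs :: "'a set set"
  assumes disjoint: "\<And>C1 C2. C1 \<in> Cs \<Longrightarrow> C2 \<in> Cs \<Longrightarrow> C1 \<noteq> C2 \<Longrightarrow> C1 \<inter> C2 = {}"
begin

lemma rooted_matching_shift_hole:
  assumes I: "rooted_matching Cs R q" and C: "C \<in> Cs" "h \<in> C" "q h = None" "C = reach q h"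
    and arc: "(h, v) \<in> arcs q"
  shows "rooted_matching Cs R (shift_hole q h v)" "v \<in> C" "C = reach (shift_hole q h v) v"
proof -
  have q: "max_matching q"
    using I by (simp add: rooted_matching_def)
  show "v \<in> C"
    using C(4) arc by (auto simp: reach_def)
  show C_reach: "C = reach (shift_hole q h v) v"
    using C(4) reach_shift_hole[OF q C(3) arc] by simp
  have "\<exists>h'\<in>C'. shift_hole q h v h' = None \<and> C' = reach (shift_hole q h v) h'"
    if C': "C' \<in> Cs" for C'
  proof (cases "C' = C")
    case True
    with \<open>v \<in> C\<close> C_reach show ?thesis
      by (auto simp: shift_hole_def)
  next
    case False
    obtain h' where h': "h' \<in> C'" "q h' = None" "C' = reach q h'"
      using I C' by (rule rooted_matchingE)
    have "h' \<notin> C"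
      using disjoint[OF C' C(1) False] h'(1) by blast
    then have "h' \<noteq> h" "h' \<noteq> v"
      using C(2) \<open>v \<in> C\<close> by auto
    then have "shift_hole q h v h' = None" "C' = reach (shift_hole q h v) h'"
      using h'(2,3) reach_shift_hole_other[OF q C(3) arc] by (simp_all add: shift_hole_def)
    with h'(1) show ?thesis
      by blast
  qed
  moreover have "z \<in> \<Union>Cs" if z: "z \<in> V" "shift_hole q h v z = None" for z
  proof (cases "z = v")
    case False
    then have "q z = None"
      using z(2) by (auto simp: shift_hole_def split: if_splits)
    then show ?thesis
      using I z(1) by (simp add: rooted_matching_def)
  qed (use C(1) \<open>v \<in> C\<close> in blast)
  ultimately show "rooted_matching Cs R (shift_hole q h v)"
    using I max_matching_shift_hole[OF q C(3) arc] ran_shift_hole[OF q C(3) arc]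
    by (auto simp: rooted_matching_def)
qed

lemma rooted_matching_move_hole:
  assumes "(h, r) \<in> arcs q ^^ n" "rooted_matching Cs R q"
    and "C \<in> Cs" "h \<in> C" "q h = None" "C = reach q h"
  shows "\<exists>q'. rooted_matching Cs R q' \<and> q' r = None \<and> (\<forall>z. z \<notin> C \<longrightarrow> q' z = q z)"
  using assms
proof (induction n arbitrary: q h)
  case (Suc n)
  then obtain v where hv: "(h, v) \<in> arcs q" and vr: "(v, r) \<in> arcs q ^^ n"
    using relpow_Suc_D2 by metis
  have q: "max_matching q"
    using Suc.prems(2) by (simp add: rooted_matching_def)
  note shifted = rooted_matching_shift_hole[OF Suc.prems(2-6) hv]
  have "(v, r) \<in> arcs (shift_hole q h v) ^^ n"
    using vr arc_neq[OF hv, symmetric] no_arc_into_hole[of q h, OF Suc.prems(5)]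
    by (rule relpow_transfer_avoiding) (auto simp: arcs_shift_hole[OF q Suc.prems(5) hv])
  moreover have "shift_hole q h v v = None"
    by (simp add: shift_hole_def)
  ultimately obtain q' where "rooted_matching Cs R q'" "q' r = None"
    "\<forall>z. z \<notin> C \<longrightarrow> q' z = shift_hole q h v z"
    using Suc.IH shifted Suc.prems(3) by blast
  with Suc.prems(4) shifted(2) show ?case
    by (auto simp: shift_hole_def)
qed auto

lemma rooted_matching_reroot:
  assumes "finite Cs" "\<And>C. C \<in> Cs \<Longrightarrow> x C \<in> C" "rooted_matching Cs R q"
  shows "\<exists>q'. rooted_matching Cs R q' \<and> (\<forall>C\<in>Cs. q' (x C) = None)"
proof -
  have "\<exists>q'. rooted_matching Cs R q' \<and> (\<forall>C\<in>D. q' (x C) = None)" if "finite D" "D \<subseteq> Cs" for D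
    using that
  proof (induction D rule: finite_induct)
    case (insert C D)
    then obtain q' where q': "rooted_matching Cs R q'" "\<forall>C\<in>D. q' (x C) = None"
      by blast
    have C: "C \<in> Cs"
      using insert.prems by blast
    then obtain h where h: "h \<in> C" "q' h = None" "C = reach q' h"
      using rooted_matchingE[OF q'(1)] by blast
    then obtain n where "(h, x C) \<in> arcs q' ^^ n"
      using assms(2)[OF C] by (auto simp: reach_def rtrancl_power)
    then obtain q'' where q'': "rooted_matching Cs R q''" "q'' (x C) = None"
      "\<forall>z. z \<notin> C \<longrightarrow> q'' z = q' z"
      using rooted_matching_move_hole[OF _ q'(1) C h] by blast
    have "x C' \<notin> C" if "C' \<in> D" for C'
      using disjoint[OF _ C, of C'] assms(2) insert.hyps(2) insert.prems that by blast
    with q' q'' show ?case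
      by auto
  qed (use assms(3) in blast)
  then show ?thesis
    using assms(1) by blast
qed

end

section \<open>Independent neighbourhoods give EFX orientations\<close>

lemma rooted_matching_forest:
  assumes p: "max_matching p"
  shows "rooted_matching (components (forest_vertices p) (forest_edges p)) (ran p) p"
proof -
  have "\<exists>h\<in>C. p h = None \<and> C = reach p h"
    if "C \<in> components (forest_vertices p) (forest_edges p)" for C
    using components_forest[OF p that] reach_self by metis
  moreover have "z \<in> \<Union> (components (forest_vertices p) (forest_edges p))"
    if "z \<in> V" "p z = None" for z
    using that reach_self by (auto simp: Union_components forest_vertices_def)
  ultimately show ?thesis
    using p by (simp add: rooted_matching_def)
qed

lemma rooted_children_in_neighbourhoods:
  fixes p :: "'a \<Rightarrow> 'a set option"
  defines "Cs \<equiv> components (forest_vertices p) (forest_edges p)"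
  assumes q: "rooted_matching Cs (ran p) q"
    and roots: "\<And>C. C \<in> Cs \<Longrightarrow> x C \<in> C \<and> q (x C) = None"
    and r: "q r = None" "(r, y) \<in> arcs q"
  shows "y \<in> (\<Union>C\<in>Cs. nbrs (forest_edges p) (x C))"
proof -
  have "r \<in> V"
    using r(2) likes_in_V by (auto simp: arcs_def)
  then obtain C where C: "C \<in> Cs" "r \<in> C"
    using q r(1) by (auto simp: rooted_matching_def)
  obtain h where h: "h \<in> C" "q h = None" "C = reach q h"
    using q C(1) by (rule rooted_matchingE)
  have "r = h" "x C = h"
    using reach_hole_unique[of q h] h r(1) C(2) roots[OF C(1)] by auto
  then have "y \<in> C"
    using r(2) h(3) by (auto simp: reach_def)
  have "{r, y} \<in> ran p"
    using arc_target_holds[OF r(2)] q by (auto simp: rooted_matching_def ran_def)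
  moreover have "C \<subseteq> forest_vertices p"
    using C(1) component_subset by (simp add: Cs_def)
  ultimately have "{x C, y} \<in> forest_edges p"
    using C(2) \<open>y \<in> C\<close> \<open>r = h\<close> \<open>x C = h\<close> by (auto simp: forest_edges_def)
  with C(1) show ?thesis
    by (auto simp: nbrs_def)
qed

lemma EFX_orientation_if_independent_neighbourhoods:
  assumes "\<forall>W F. subgraph W F V E \<and> forest F \<longrightarrow>
    (\<exists>x. (\<forall>C\<in>components W F. x C \<in> C) \<and> independent E (\<Union>C\<in>components W F. nbrs F (x C)))"
  shows "\<exists>h. EFX_orientation V E f h"
proof -
  obtain p where p: "max_matching p"
    using ex_max_matching by blast
  define Cs where "Cs = components (forest_vertices p) (forest_edges p)"
  obtain x where x: "\<And>C. C \<in> Cs \<Longrightarrow> x C \<in> C"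
    and indep: "independent E (\<Union>C\<in>Cs. nbrs (forest_edges p) (x C))"
    using assms subgraph_forest[OF p] forest_forest_edges[OF p] unfolding Cs_def by blast
  have "finite (forest_vertices p)"
    using subgraph_forest[OF p] finite_V finite_subset by (auto simp: subgraph_def)
  then have "finite Cs"
    unfolding Cs_def by (rule finite_components)
  moreover have "\<And>C1 C2. C1 \<in> Cs \<Longrightarrow> C2 \<in> Cs \<Longrightarrow> C1 \<noteq> C2 \<Longrightarrow> C1 \<inter> C2 = {}"
    unfolding Cs_def by (rule components_disjoint)
  moreover have "rooted_matching Cs (ran p) p"
    unfolding Cs_def by (rule rooted_matching_forest[OF p])
  ultimately obtain q where q: "rooted_matching Cs (ran p) q" "\<forall>C\<in>Cs. q (x C) = None"
    using rooted_matching_reroot x by metis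
  then have "max_matching q"
    by (simp add: rooted_matching_def)
  then show ?thesis
    using EFX_matching_orientation indep rooted_children_in_neighbourhoods[of p q x] q x
    unfolding Cs_def by blast
qed

end

lemma independent_neighbourhoods_imp_strongly_EFX_orientable:
  assumes "simple_graph V E"
    and "\<forall>W F. subgraph W F V E \<and> forest F \<longrightarrow>
      (\<exists>x. (\<forall>C\<in>components W F. x C \<in> C) \<and> independent E (\<Union>C\<in>components W F. nbrs F (x C)))"
  shows "strongly_EFX_orientable_01 V E"
  unfolding strongly_EFX_orientable_01_def
proof (intro allI impI)
  fix f assume "additive_01_instance V E f"
  then interpret valued_graph V E f
    using assms(1) by unfold_locales
  show "\<exists>h. EFX_orientation V E f h"
    using assms(2) by (rule EFX_orientation_if_independent_neighbourhoods)
qed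

theorem mainTheorem1:
  fixes V :: "'a set" and E :: "'a set set"
  assumes "simple_graph V E"
  shows "strongly_EFX_orientable_01 V E \<longleftrightarrow>
    (\<forall>W F. subgraph W F V E \<and> forest F \<longrightarrow>
       (\<exists>x. (\<forall>C\<in>components W F. x C \<in> C) \<and>
            independent E (\<Union>C\<in>components W F. nbrs F (x C))))"
  using strongly_EFX_orientable_imp_independent_neighbourhoods[OF assms]
    independent_neighbourhoods_imp_strongly_EFX_orientable[OF assms]
  by blast

end
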